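(* Let $\mathbb{H}$ be one of $\mathbb{Z}$, $\mathbb{N}$, $\mathbb{N}^+$. Every upper quasi-density $\mu^\ast$ on $\mathbb{H}$ has the strong Darboux property: for all $X,Y\subseteq\mathbb{H}$ with $X\subseteq Y$ and every real $a$ with $\mu^\ast(X)\le a\le \mu^\ast(Y)$, there exists $A$ with $X\subseteq A\subseteq Y$ and $\mu^\ast(A)=a$. In particular, this holds for every upper density on $\mathbb{H}$.
   Context: $\mathbb{N}=\{0,1,2,\dots\}$, $\mathbb{N}^+=\{1,2,\dots\}$. $\mathbb{H}$ denotes one of $\mathbb{Z}$, $\mathbb{N}$, $\mathbb{N}^+$. For $X\subseteq\mathbb{H}$, $k\in\mathbb{N}^+$, $h\in\mathbb{N}$, write $k\cdot X+h:=\{kx+h: x\in X\}$. An upper quasi-density on $\mathbb{H}$ is a function $\mu^\ast:\mathcal{P}(\mathbb{H})\to\mathbb{R}$ such that: (i) $\mu^\ast(\mathbb{H})=1$; (ii) $\mu^\ast(X)\le 1$ for all $X\subseteq\mathbb{H}$; (iii) $\mu^\ast(X\cup Y)\le\mu^\ast(X)+\mu^\ast(Y)$ for all $X,Y\subseteq\mathbb{H}$; (iv) $\mu^\ast(k\cdot X+h)=\frac1k\mu^\ast(X)$ for all $X\subseteq\mathbb{H}$ and $h,k\in\mathbb{N}^+$. An upper density is an upper quasi-density that is moreover monotone ($X\subseteq Y\Rightarrow \mu^\ast(X)\le\mu^\ast(Y)$). A function $f:\mathcal{P}(S)\to\mathbb{R}$ has the strong Darboux property if for all $X\subseteq Y\subseteq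 S$ and every $a\in[f(X),f(Y)]$ there is $A$ with $X\subseteq A\subseteq Y$ and $f(A)=a$ (if $f(Y)<f(X)$ the interval is empty and the condition is vacuous). *)

theory Defs
  imports Complex_Main
begin

definition admissible_H :: "int set \<Rightarrow> bool" where
  "admissible_H H \<longleftrightarrow> H = UNIV \<or> H = {0..} \<or> H = {1..}"

definition dil_shift :: "nat \<Rightarrow> nat \<Rightarrow> int set \<Rightarrow> int set" where
  "dil_shift k h X = (\<lambda>x. int k * x + int h) ` X"

text \<open>Upper quasi-density on H; mu is only constrained on subsets of H (its domain P(H)).\<close>
definition upper_quasi_density :: "int set \<Rightarrow> (int set \<Rightarrow> real) \<Rightarrow> bool" where
  "upper_quasi_density H mu \<longleftrightarrow>
     mu H = 1 \<and>
     (\<forall>X. X \<subseteq> H \<longrightarrow> mu X \<le> 1) \<and>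
     (\<forall>X Y. X \<subseteq> H \<longrightarrow> Y \<subseteq> H \<longrightarrow> mu (X \<union> Y) \<le> mu X + mu Y) \<and>
     (\<forall>X h k. X \<subseteq> H \<longrightarrow> 0 < h \<longrightarrow> 0 < k \<longrightarrow> mu (dil_shift k h X) = mu X / real k)"

definition upper_density :: "int set \<Rightarrow> (int set \<Rightarrow> real) \<Rightarrow> bool" where
  "upper_density H mu \<longleftrightarrow> upper_quasi_density H mu \<and>
     (\<forall>X Y. X \<subseteq> Y \<longrightarrow> Y \<subseteq> H \<longrightarrow> mu X \<le> mu Y)"

definition strong_darboux :: "'a set \<Rightarrow> ('a set \<Rightarrow> real) \<Rightarrow> bool" where
  "strong_darboux S f \<longleftrightarrow>
     (\<forall>X Y a. X \<subseteq> Y \<longrightarrow> Y \<subseteq> S \<longrightarrow> f X \<le> a \<longrightarrow> a \<le> f Y \<longrightarrow>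
        (\<exists>A. X \<subseteq> A \<and> A \<subseteq> Y \<and> f A = a))"

end

theory Submission
  imports Defs
begin

text \<open>Reading the binary digits of n in reverse order gives a point x_n of [0,1], approximated
from below by bitrev m n / 2^m. The sets bitrev_cut t, roughly {n. x_n < t}, increase from
the empty set (t = 0) to everything (t = 1), and when t - s \<le> 2^-m the increment from
bitrev_cut s to bitrev_cut t consists of integers whose reversed m-digit prefix is one of two
values, hence lies in two residue classes modulo 2^m. An upper quasi-density kills finite sets
and so gives each residue class modulo K density at most 1/K. Therefore
t \<mapsto> mu (X \<union> ((Y - X) \<inter> bitrev_cut t)) never jumps upwards, runs from mu X to mu Y,
and the supremum of the parameters where it is at most a is a parameter where it equals a.\<close>

fun bitrev :: "nat \<Rightarrow> int \<Rightarrow> int" where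
  "bitrev 0 n = 0"
| "bitrev (Suc m) n = 2 * bitrev m n + n div 2 ^ m mod 2"

lemma bitrev_bounds: "0 \<le> bitrev m n \<and> bitrev m n < 2 ^ m"
  by (induction m) auto

lemma bitrev_eq_imp_mod_eq: "bitrev m n = bitrev m n' \<Longrightarrow> n mod 2 ^ m = n' mod 2 ^ m"
proof (induction m)
  case 0
  then show ?case by simp
next
  case (Suc m)
  have digits: "2 * a + b = 2 * a' + b' \<Longrightarrow> 0 \<le> b \<Longrightarrow> b < 2 \<Longrightarrow> 0 \<le> b' \<Longrightarrow> b' < 2
      \<Longrightarrow> b = b' \<and> a = a'" for a b a' b' :: int
    by presburger
  have "n div 2 ^ m mod 2 = n' div 2 ^ m mod 2 \<and> bitrev m n = bitrev m n'"
    using Suc.prems by (intro digits) auto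
  moreover have "a mod 2 ^ Suc m = 2 ^ m * (a div 2 ^ m mod 2) + a mod 2 ^ m" for a :: int
    using mod_mult2_eq' [of a "2 ^ m" 2] by (simp add: power_Suc2 mult.commute)
  ultimately show ?case
    using Suc.IH by metis
qed

lemma bitrev_mult_power_le: "bitrev m n * 2 ^ d \<le> bitrev (m + d) n"
  by (induction d) (auto simp: mult.commute[of 2] mult.assoc[symmetric] intro: order_trans)

lemma bitrev_add_le: "bitrev (m + d) n + 1 \<le> (bitrev m n + 1) * 2 ^ d"
  by (induction d) auto

text \<open>bitrev m n / 2^m is the m-digit truncation of x_n = sum_i digit_i(n) 2^-(i+1) and lies
within 2^-m below it, so bitrev_cut t lies between {n. x_n < t} and {n. x_n \<le> t}.\<close>
definition bitrev_cut :: "real \<Rightarrow> int set" where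
  "bitrev_cut t = {n. \<exists>m. real_of_int (bitrev m n + 1) \<le> t * 2 ^ m}"

lemma bitrev_cut_mono: "s \<le> t \<Longrightarrow> bitrev_cut s \<subseteq> bitrev_cut t"
  unfolding bitrev_cut_def
  by auto (meson order_trans mult_right_mono zero_le_power zero_le_numeral)

lemma bitrev_cut_zero: "bitrev_cut 0 = {}"
  unfolding bitrev_cut_def using bitrev_bounds by (auto simp: not_le add_nonneg_pos)

lemma bitrev_cut_one: "bitrev_cut 1 = UNIV"
  unfolding bitrev_cut_def by (auto intro: exI[of _ 0])

lemma bitrev_less_of_mem_cut:
  assumes "n \<in> bitrev_cut t"
  shows "real_of_int (bitrev m n) < t * 2 ^ m"
proof -
  from assms obtain M where M: "real_of_int (bitrev M n + 1) \<le> t * 2 ^ M"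
    unfolding bitrev_cut_def by auto
  show ?thesis
  proof (cases "M \<le> m")
    case True
    then obtain d where d: "m = M + d"
      using le_Suc_ex by blast
    have "bitrev m n + 1 \<le> (bitrev M n + 1) * 2 ^ d"
      using bitrev_add_le[of M d n] d by simp
    then have "real_of_int (bitrev m n + 1) \<le> real_of_int ((bitrev M n + 1) * 2 ^ d)"
      by (simp only: of_int_le_iff)
    then have "real_of_int (bitrev m n + 1) \<le> real_of_int (bitrev M n + 1) * 2 ^ d"
      by simp
    also have "\<dots> \<le> t * 2 ^ M * 2 ^ d"
      using M by (simp add: mult_right_mono)
    finally show ?thesis
      using d by (simp add: power_add)
  next
    case False
    then obtain d where d: "M = m + d"
      by (metis le_Suc_ex nat_le_linear)
    have "bitrev m n * 2 ^ d < bitrev M n + 1"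
      using bitrev_mult_power_le[of m n d] d by simp
    then have "real_of_int (bitrev m n * 2 ^ d) < real_of_int (bitrev M n + 1)"
      by (simp only: of_int_less_iff)
    then have "real_of_int (bitrev m n) * 2 ^ d < real_of_int (bitrev M n + 1)"
      by simp
    also have "\<dots> \<le> t * 2 ^ m * 2 ^ d"
      using M d by (simp add: power_add mult.assoc)
    finally show ?thesis
      by simp
  qed
qed

lemma bitrev_of_mem_cut_diff:
  assumes "t - s \<le> 1 / 2 ^ m" "n \<in> bitrev_cut t" "n \<notin> bitrev_cut s"
  shows "bitrev m n = \<lfloor>s * 2 ^ m\<rfloor> \<or> bitrev m n = \<lfloor>s * 2 ^ m\<rfloor> + 1"
proof -
  have "t * 2 ^ m \<le> s * 2 ^ m + 1"
    using assms(1) by (simp add: field_simps)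
  then have "real_of_int (bitrev m n) < s * 2 ^ m + 1"
    using bitrev_less_of_mem_cut[OF assms(2), where m = m] by simp
  moreover have "s * 2 ^ m < real_of_int (bitrev m n + 1)"
    using assms(3) unfolding bitrev_cut_def by (auto simp: not_le)
  ultimately show ?thesis
    by linarith
qed

lemma admissible_H_add_mem: "admissible_H H \<Longrightarrow> x \<in> H \<Longrightarrow> x + int j \<in> H"
  unfolding admissible_H_def by auto

lemma admissible_H_not_mem: "admissible_H H \<Longrightarrow> w \<notin> H \<Longrightarrow> w \<le> 0 \<and> H \<subseteq> {0..}"
  unfolding admissible_H_def by auto

lemma uqd_union_le:
  "upper_quasi_density H mu \<Longrightarrow> X \<subseteq> H \<Longrightarrow> Y \<subseteq> H \<Longrightarrow> mu (X \<union> Y) \<le> mu X + mu Y"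
  by (simp add: upper_quasi_density_def)

lemma uqd_le_one: "upper_quasi_density H mu \<Longrightarrow> X \<subseteq> H \<Longrightarrow> mu X \<le> 1"
  by (simp add: upper_quasi_density_def)

lemma uqd_dil_shift:
  "upper_quasi_density H mu \<Longrightarrow> X \<subseteq> H \<Longrightarrow> 0 < h \<Longrightarrow> 0 < k
    \<Longrightarrow> mu (dil_shift k h X) = mu X / real k"
  by (simp add: upper_quasi_density_def)

lemma uqd_nonneg:
  assumes "upper_quasi_density H mu" "X \<subseteq> H"
  shows "0 \<le> mu X"
  using uqd_union_le[OF assms(1,2,2)] by simp

lemma uqd_empty:
  assumes "upper_quasi_density H mu"
  shows "mu {} = 0"
  using uqd_dil_shift[OF assms, of "{}" 1 2] by (simp add: dil_shift_def)

lemma uqd_singleton_shift: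
  assumes "upper_quasi_density H mu" "admissible_H H" "x \<in> H"
  shows "mu {x + int j} = mu {x}"
proof (induction j)
  case 0
  then show ?case by simp
next
  case (Suc j)
  have "dil_shift 1 1 {x + int j} = {x + int (Suc j)}"
    by (simp add: dil_shift_def)
  moreover have "x + int j \<in> H"
    using admissible_H_add_mem assms by blast
  ultimately show ?case
    using Suc uqd_dil_shift[OF assms(1), of "{x + int j}" 1 1] by simp
qed

text \<open>With y \<ge> 0, the singleton {2y + 1} is both a shift of {y} and its image under
x \<mapsto> 2x + 1, so mu {y} = mu {y} / 2.\<close>
lemma uqd_singleton:
  assumes uqd: "upper_quasi_density H mu" and adm: "admissible_H H" and "x \<in> H"
  shows "mu {x} = 0"
proof -
  define y where "y = x + int (nat \<bar>x\<bar>)"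
  have y: "0 \<le> y" "y \<in> H"
    unfolding y_def using admissible_H_add_mem[OF adm \<open>x \<in> H\<close>, of "nat \<bar>x\<bar>"] by simp_all
  have "mu {y} = mu (dil_shift 2 1 {y})"
    using uqd_singleton_shift[OF uqd adm y(2), of "nat (y + 1)"] y
    by (simp add: dil_shift_def algebra_simps)
  also have "\<dots> = mu {y} / 2"
    using uqd_dil_shift[OF uqd, of "{y}" 1 2] y by simp
  finally have "mu {y} = mu {y} / 2" .
  then show ?thesis
    using uqd_singleton_shift[OF uqd adm \<open>x \<in> H\<close>, of "nat \<bar>x\<bar>"] unfolding y_def by simp
qed

lemma uqd_finite:
  assumes uqd: "upper_quasi_density H mu" and adm: "admissible_H H"
    and "finite F" "F \<subseteq> H"
  shows "mu F = 0"
proof -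
  have "mu F \<le> 0"
    using assms(3,4)
  proof (induction F rule: finite_induct)
    case empty
    then show ?case using uqd_empty[OF uqd] by simp
  next
    case (insert x F)
    have "mu ({x} \<union> F) \<le> mu {x} + mu F"
      using uqd_union_le[OF uqd, of "{x}" F] insert by auto
    then show ?case
      using uqd_singleton[OF uqd adm] insert by auto
  qed
  then show ?thesis
    using uqd_nonneg[OF uqd assms(4)] by simp
qed

text \<open>A residue class r + K\<int> is, up to a finite set, the image of a subset of H under
x \<mapsto> K x + h with h > 0 in that class.\<close>
lemma uqd_residue_class_le:
  assumes uqd: "upper_quasi_density H mu" and adm: "admissible_H H"
    and VH: "V \<subseteq> H" and K: "0 < K"
    and res: "\<And>v. v \<in> V \<Longrightarrow> v mod int K = r mod int K"
  shows "mu V \<le> 1 / real K"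
proof -
  define h where "h = nat (r mod int K) + K"
  define W where "W = {w \<in> H. int K * w + int h \<in> V}"
  have h: "0 < h" "int h mod int K = r mod int K"
    unfolding h_def using K by simp_all
  have V_split: "V = dil_shift K h W \<union> (V \<inter> {0..int h})"
  proof (intro equalityI subsetI)
    fix v
    assume v: "v \<in> V"
    define w where "w = (v - int h) div int K"
    have "(v - int h) mod int K = 0"
      using res[OF v] h(2) by (simp add: mod_diff_eq[symmetric])
    then have vw: "v = int K * w + int h"
      unfolding w_def by (metis add_0_right diff_add_cancel mult_div_mod_eq)
    show "v \<in> dil_shift K h W \<union> (V \<inter> {0..int h})"
    proof (cases "w \<in> H")
      case True
      then show ?thesis
        using v vw unfolding W_def dil_shift_def by auto
    next
      case False
      then have "w \<le> 0" "v \<ge> 0"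
        using admissible_H_not_mem[OF adm] v VH by auto
      then show ?thesis
        using v vw K by (simp add: mult_nonneg_nonpos)
    qed
  qed (auto simp: W_def dil_shift_def)
  have WH: "W \<subseteq> H"
    unfolding W_def by auto
  have "dil_shift K h W \<subseteq> H"
    using VH by (auto simp: W_def dil_shift_def)
  then have "mu V \<le> mu (dil_shift K h W) + mu (V \<inter> {0..int h})"
    using V_split VH by (metis uqd_union_le[OF uqd] inf.coboundedI1)
  also have "mu (V \<inter> {0..int h}) = 0"
    using uqd_finite[OF uqd adm] VH by auto
  also have "mu (dil_shift K h W) = mu W / real K"
    using uqd_dil_shift[OF uqd WH h(1) K] .
  finally have "mu V \<le> mu W / real K"
    by simp
  moreover have "mu W / real K \<le> 1 / real K"
    using uqd_le_one[OF uqd WH] by (simp add: divide_right_mono)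
  ultimately show ?thesis
    by linarith
qed

lemma uqd_bitrev_fibre_le:
  assumes uqd: "upper_quasi_density H mu" and adm: "admissible_H H" and "S \<subseteq> H"
  shows "mu {n \<in> S. bitrev m n = j} \<le> 1 / 2 ^ m"
proof (cases "\<exists>n\<^sub>0\<in>S. bitrev m n\<^sub>0 = j")
  case True
  then obtain n\<^sub>0 where "bitrev m n\<^sub>0 = j"
    by blast
  then have same_class: "v mod int (2 ^ m) = n\<^sub>0 mod int (2 ^ m)"
    if "v \<in> {n \<in> S. bitrev m n = j}" for v
    using that bitrev_eq_imp_mod_eq by auto
  have "mu {n \<in> S. bitrev m n = j} \<le> 1 / real (2 ^ m)"
    by (rule uqd_residue_class_le[OF uqd adm _ _ same_class]) (use \<open>S \<subseteq> H\<close> in auto)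
  then show ?thesis
    by simp
next
  case False
  then have "{n \<in> S. bitrev m n = j} = {}"
    by auto
  then have "mu {n \<in> S. bitrev m n = j} = 0"
    using uqd_empty[OF uqd] by (simp only:)
  then show ?thesis
    by simp
qed

lemma uqd_cut_increment_le:
  assumes uqd: "upper_quasi_density H mu" and adm: "admissible_H H"
    and "X \<subseteq> H" "Z \<subseteq> H" "s \<le> t" "t - s \<le> 1 / 2 ^ m"
  shows "mu (X \<union> (Z \<inter> bitrev_cut t)) \<le> mu (X \<union> (Z \<inter> bitrev_cut s)) + 2 / 2 ^ m"
proof -
  define j where "j = \<lfloor>s * 2 ^ m\<rfloor>"
  define D where "D i = {n \<in> Z \<inter> bitrev_cut t. bitrev m n = i}" for i
  have DH: "D i \<subseteq> H" for i
    unfolding D_def using assms(4) by auto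
  have "X \<union> (Z \<inter> bitrev_cut t) = (X \<union> (Z \<inter> bitrev_cut s)) \<union> (D j \<union> D (j + 1))"
    using bitrev_of_mem_cut_diff[OF assms(6)] bitrev_cut_mono[OF assms(5)]
    unfolding D_def j_def by auto
  then have "mu (X \<union> (Z \<inter> bitrev_cut t))
      \<le> mu (X \<union> (Z \<inter> bitrev_cut s)) + mu (D j \<union> D (j + 1))"
    using assms(3,4) DH by (auto intro: uqd_union_le[OF uqd])
  moreover have "mu (D j \<union> D (j + 1)) \<le> mu (D j) + mu (D (j + 1))"
    by (intro uqd_union_le[OF uqd] DH)
  moreover have fibre: "mu (D i) \<le> 1 / 2 ^ m" for i
    unfolding D_def by (rule uqd_bitrev_fibre_le[OF uqd adm]) (use assms(4) in auto)
  moreover have "1 / 2 ^ m + 1 / 2 ^ m = (2 :: real) / 2 ^ m"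
    by simp
  ultimately show ?thesis
    using fibre[of j] fibre[of "j + 1"] by linarith
qed

text \<open>The witness is the supremum of the points where f is at most a.\<close>
lemma intermediate_value_no_upward_jumps:
  fixes f :: "real \<Rightarrow> real"
  assumes no_jump: "\<And>e. e > 0 \<Longrightarrow> \<exists>d>0. \<forall>s t. 0 \<le> s \<longrightarrow> s \<le> t \<longrightarrow> t \<le> 1 \<longrightarrow> t - s \<le> d
      \<longrightarrow> f t \<le> f s + e"
    and "f 0 \<le> a" "a \<le> f 1"
  shows "\<exists>t. 0 \<le> t \<and> t \<le> 1 \<and> f t = a"
proof -
  define S where "S = {t. 0 \<le> t \<and> t \<le> 1 \<and> f t \<le> a}"
  define \<tau> where "\<tau> = Sup S"
  have S: "0 \<in> S" "bdd_above S"
    unfolding S_def bdd_above_def using \<open>f 0 \<le> a\<close> by auto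
  have \<tau>: "0 \<le> \<tau>" "\<tau> \<le> 1"
    unfolding \<tau>_def using S by (auto intro!: cSup_upper cSup_least simp: S_def)
  have "f \<tau> \<le> a"
  proof (rule ccontr)
    assume "\<not> f \<tau> \<le> a"
    then obtain d where "d > 0" and d: "\<forall>s t. 0 \<le> s \<longrightarrow> s \<le> t \<longrightarrow> t \<le> 1 \<longrightarrow> t - s \<le> d
        \<longrightarrow> f t \<le> f s + (f \<tau> - a) / 2"
      using no_jump[of "(f \<tau> - a) / 2"] by auto
    then obtain s where "s \<in> S" "\<tau> - d < s"
      using less_cSup_iff[of S "\<tau> - d"] S unfolding \<tau>_def by auto
    moreover have "s \<le> \<tau>"
      unfolding \<tau>_def using cSup_upper \<open>s \<in> S\<close> S by blast
    ultimately have "f \<tau> \<le> f s + (f \<tau> - a) / 2" "f s \<le> a"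
      using d \<tau> unfolding S_def by auto
    then show False
      using \<open>\<not> f \<tau> \<le> a\<close> by (simp add: field_simps)
  qed
  moreover have "a \<le> f \<tau>"
  proof (rule ccontr)
    assume less: "\<not> a \<le> f \<tau>"
    then have "\<tau> < 1"
      using \<tau> \<open>a \<le> f 1\<close> by (cases "\<tau> = 1") auto
    obtain d where "d > 0" and d: "\<forall>s t. 0 \<le> s \<longrightarrow> s \<le> t \<longrightarrow> t \<le> 1 \<longrightarrow> t - s \<le> d
        \<longrightarrow> f t \<le> f s + (a - f \<tau>) / 2"
      using no_jump[of "(a - f \<tau>) / 2"] less by auto
    define t where "t = \<tau> + min d (1 - \<tau>)"
    have "\<tau> < t" "t \<le> 1" "t - \<tau> \<le> d"
      unfolding t_def using \<open>\<tau> < 1\<close> \<open>d > 0\<close> by auto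
    then have "f t \<le> f \<tau> + (a - f \<tau>) / 2"
      using d \<tau> by auto
    then have "t \<in> S"
      using less \<open>\<tau> < t\<close> \<open>t \<le> 1\<close> \<tau> unfolding S_def by (simp add: field_simps)
    then show False
      using cSup_upper[OF _ S(2)] \<open>\<tau> < t\<close> unfolding \<tau>_def by fastforce
  qed
  ultimately show ?thesis
    using \<tau> by auto
qed

lemma uqd_strong_darboux:
  assumes uqd: "upper_quasi_density H mu" and adm: "admissible_H H"
  shows "strong_darboux H mu"
  unfolding strong_darboux_def
proof (intro allI impI)
  fix X Y a
  assume "X \<subseteq> Y" "Y \<subseteq> H" "mu X \<le> a" "a \<le> mu Y"
  define f where "f t = mu (X \<union> ((Y - X) \<inter> bitrev_cut t))" for t
  have "\<exists>d>0. \<forall>s t. 0 \<le> s \<longrightarrow> s \<le> t \<longrightarrow> t \<le> 1 \<longrightarrow> t - s \<le> d \<longrightarrow> f t \<le> f s + e"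
    if "e > 0" for e
  proof -
    obtain m where "(1 / 2) ^ m < e / (2 :: real)"
      using real_arch_pow_inv[of "e / 2" "1 / 2"] \<open>e > 0\<close> by auto
    then have "2 / 2 ^ m < e"
      by (simp add: power_divide field_simps)
    show ?thesis
    proof (intro exI[of _ "1 / 2 ^ m"] conjI allI impI)
      fix s t :: real
      assume "s \<le> t" "t - s \<le> 1 / 2 ^ m"
      then have "f t \<le> f s + 2 / 2 ^ m"
        unfolding f_def using \<open>X \<subseteq> Y\<close> \<open>Y \<subseteq> H\<close>
        by (intro uqd_cut_increment_le[OF uqd adm]) auto
      then show "f t \<le> f s + e"
        using \<open>2 / 2 ^ m < e\<close> by linarith
    qed simp
  qed
  moreover have "f 0 = mu X" "f 1 = mu Y"
    unfolding f_def bitrev_cut_zero bitrev_cut_one using \<open>X \<subseteq> Y\<close> by (simp_all add: Un_absorb1)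
  ultimately obtain t where "f t = a"
    using intermediate_value_no_upward_jumps[of f a] \<open>mu X \<le> a\<close> \<open>a \<le> mu Y\<close> by auto
  then show "\<exists>A. X \<subseteq> A \<and> A \<subseteq> Y \<and> mu A = a"
    unfolding f_def using \<open>X \<subseteq> Y\<close>
    by (intro exI[of _ "X \<union> ((Y - X) \<inter> bitrev_cut t)"]) auto
qed

theorem mainTheorem1:
  fixes H :: "int set"
  assumes "admissible_H H"
  shows "\<forall>mu. (upper_quasi_density H mu \<longrightarrow> strong_darboux H mu) \<and>
              (upper_density H mu \<longrightarrow> strong_darboux H mu)"
  using uqd_strong_darboux[OF _ assms] unfolding upper_density_def by blast

end
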